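(* For every integer $m \geq 1$, the clique number of the graph $\mathrm{Cay}(\sigma_m)$ is at most $\rho(2^m)$, where $\rho$ is the Hurwitz-Radon function. Moreover, $\rho(2^m) < 2^m$ for $m \geq 4$.
   Context: Identify $\mathbb{Z}_2^{2m}$ with the integers $0,\dots,4^m-1$ via binary representation, so each $i \in \mathbb{Z}_2^{2m}$ has a base-4 representation with $m$ digits (each base-4 digit being a consecutive pair of bits). Define $\sigma_m:\mathbb{Z}_2^{2m}\to\mathbb{Z}_2$ by $\sigma_m(i)=1$ if and only if the number of base-4 digits of $i$ equal to $1$ is odd. The Cayley graph $\mathrm{Cay}(\sigma_m)$ is the simple undirected graph with vertex set $\mathbb{Z}_2^{2m}$ in which distinct $i,j$ are adjacent if and only if $\sigma_m(i+j)=1$. The Hurwitz-Radon function is defined by $\rho(2^{4d+c}) = 2^c + 8d$ for integers $d \geq 0$ and $0 \leq c < 4$. *)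

theory Defs
  imports Main
begin

text \<open>Elements of Z_2^{2m} are identified with naturals 0..4^m-1; group addition is bitwise xor.\<close>

definition base4_digit :: "nat \<Rightarrow> nat \<Rightarrow> nat" where
  "base4_digit i k = (i div 4 ^ k) mod 4"

definition sigma :: "nat \<Rightarrow> nat \<Rightarrow> bool" where
  "sigma m i \<longleftrightarrow> odd (card {k. k < m \<and> base4_digit i k = 1})"

definition cay_adj :: "nat \<Rightarrow> nat \<Rightarrow> nat \<Rightarrow> bool" where
  "cay_adj m i j \<longleftrightarrow> i \<noteq> j \<and> sigma m (xor i j)"

definition is_clique :: "nat \<Rightarrow> nat set \<Rightarrow> bool" where
  "is_clique m S \<longleftrightarrow> S \<subseteq> {..<4 ^ m} \<and> (\<forall>i\<in>S. \<forall>j\<in>S. i \<noteq> j \<longrightarrow> cay_adj m i j)"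

definition clique_number :: "nat \<Rightarrow> nat" where
  "clique_number m = Max {card S | S. is_clique m S}"

definition hurwitz_radon :: "nat \<Rightarrow> nat" where
  "hurwitz_radon n = (let k = (THE k. n = 2 ^ k) in 2 ^ (k mod 4) + 8 * (k div 4))"

end

theory Submission
  imports Defs
begin

text \<open>
  Reading each base-4 digit as a vector of F_2^2, sigma_m is a quadratic form on F_2^(2m), and
  B(a, b) = sigma(a + b) + sigma(a) + sigma(b) is bilinear. Translate a clique so that it
  contains 0; its other elements v_0, ..., v_(n-1) satisfy sigma(v_i) = 1 and B(v_i, v_j) = 1
  for i \<noteq> j. The subset sums W_T = sum of v_i over i in T then satisfy B(W_T, v_j) = |T - {j}|
  and sigma(W_T) = binom(|T| + 1, 2) mod 2, so T \<mapsto> W_T is injective for even n, whence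
  n \<le> 2m + 1. If n = 2m the W_T exhaust F_2^(2m), and evaluating the character sum
  sum_x (-1)^sigma(x) = 2^m over them forces m = 0 or 3 mod 4; if n = 2m + 1, writing
  v_(2m) = W_T forces T = {0, ..., 2m - 1} and hence m odd. A case distinction on m mod 4
  gives the Hurwitz-Radon bound.
\<close>

lemma base4_digit_eq_take_bit: "base4_digit i k = take_bit 2 (drop_bit (2 * k) i)"
  by (simp add: base4_digit_def take_bit_eq_mod drop_bit_eq_div power_mult)

lemma base4_digit_xor: "base4_digit (xor a b) k = xor (base4_digit a k) (base4_digit b k)"
  by (simp add: base4_digit_eq_take_bit drop_bit_xor take_bit_xor)

lemma base4_digit_less: "base4_digit i k < 4"
  by (simp add: base4_digit_def)

lemma base4_digit_Suc: "base4_digit i (Suc k) = base4_digit (i div 4) k"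
  by (simp add: base4_digit_def div_mult2_eq)

lemma xor_less_power_two:
  fixes a b :: nat
  assumes "a < 2 ^ n" and "b < 2 ^ n"
  shows "xor a b < 2 ^ n"
  using assms by (metis take_bit_nat_eq_self take_bit_nat_eq_self_iff take_bit_xor)

lemma xor_less_power_four:
  fixes a b :: nat
  shows "a < 4 ^ m \<Longrightarrow> b < 4 ^ m \<Longrightarrow> xor a b < 4 ^ m"
  using xor_less_power_two[of a "2 * m" b] by (simp add: power_mult)

definition digit_one_count :: "nat \<Rightarrow> nat \<Rightarrow> nat" where
  "digit_one_count m i = (\<Sum>k<m. of_bool (base4_digit i k = 1))"

lemma sigma_iff_odd_digit_one_count: "sigma m i \<longleftrightarrow> odd (digit_one_count m i)"
  by (simp add: sigma_def digit_one_count_def lessThan_def Collect_conj_eq)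

lemma digit_one_count_Suc:
  "digit_one_count (Suc m) i = of_bool (i mod 4 = 1) + digit_one_count m (i div 4)"
  unfolding digit_one_count_def
  by (simp only: sum.lessThan_Suc_shift base4_digit_Suc) (simp add: base4_digit_def)

lemma digit_one_count_zero [simp]: "digit_one_count m 0 = 0"
  by (simp add: digit_one_count_def base4_digit_def)

lemma even_third_difference_digit_eq_one:
  fixes x y z :: nat
  assumes "x < 4" and "y < 4" and "z < 4"
  shows "even (of_bool (xor (xor x y) z = 1) + of_bool (xor x y = 1) + of_bool (xor x z = 1)
    + of_bool (xor y z = 1) + of_bool (x = 1) + of_bool (y = 1) + of_bool (z = 1) :: nat)"
proof -
  have "\<forall>x \<in> {0, 1, 2, 3}. \<forall>y \<in> {0, 1, 2, 3}. \<forall>z \<in> {0, 1, 2, 3::nat}.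
    even (of_bool (xor (xor x y) z = 1) + of_bool (xor x y = 1) + of_bool (xor x z = 1)
      + of_bool (xor y z = 1) + of_bool (x = 1) + of_bool (y = 1) + of_bool (z = 1) :: nat)"
    by simp
  moreover have "x \<in> {0, 1, 2, 3}" "y \<in> {0, 1, 2, 3}" "z \<in> {0, 1, 2, 3}"
    using assms by auto
  ultimately show ?thesis
    by blast
qed

lemma even_digit_one_count_third_difference:
  "even (digit_one_count m (xor (xor a b) c) + digit_one_count m (xor a b)
     + digit_one_count m (xor a c) + digit_one_count m (xor b c)
     + digit_one_count m a + digit_one_count m b + digit_one_count m c)"
  unfolding digit_one_count_def base4_digit_xor sum.distrib[symmetric]
  by (intro dvd_sum even_third_difference_digit_eq_one base4_digit_less)

text \<open>Addition in F_2^(2m) is \<open>xor\<close>, and addition in F_2 is \<open>\<noteq>\<close> on \<open>bool\<close>.\<close>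

definition sigma_polar :: "nat \<Rightarrow> nat \<Rightarrow> nat \<Rightarrow> bool" where
  "sigma_polar m a b \<longleftrightarrow> (sigma m (xor a b) \<noteq> sigma m a) \<noteq> sigma m b"

lemma sigma_polar_commute: "sigma_polar m a b \<longleftrightarrow> sigma_polar m b a"
  by (auto simp: sigma_polar_def xor.commute)

lemma sigma_polar_xor_left:
  "sigma_polar m (xor a b) c \<longleftrightarrow> sigma_polar m a c \<noteq> sigma_polar m b c"
  using even_digit_one_count_third_difference[of m a b c]
  unfolding sigma_polar_def sigma_iff_odd_digit_one_count xor.assoc by simp argo

lemma sigma_zero [simp]: "\<not> sigma m 0"
  by (simp add: sigma_iff_odd_digit_one_count)

lemma sigma_polar_zero_left [simp]: "\<not> sigma_polar m 0 c"
  by (simp add: sigma_polar_def)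

lemma sigma_xor: "sigma m (xor a b) \<longleftrightarrow> (sigma_polar m a b \<noteq> sigma m a) \<noteq> sigma m b"
  by (auto simp: sigma_polar_def)

text \<open>The elements \<open>v 0, \<dots>, v (n - 1)\<close> together with 0 form a clique of size \<open>n + 1\<close>.\<close>

definition zero_clique :: "nat \<Rightarrow> (nat \<Rightarrow> nat) \<Rightarrow> nat \<Rightarrow> bool" where
  "zero_clique m v n \<longleftrightarrow> (\<forall>i<n. v i < 4 ^ m \<and> sigma m (v i)) \<and>
     (\<forall>i<n. \<forall>j<n. i \<noteq> j \<longrightarrow> sigma m (xor (v i) (v j)))"

lemma zero_clique_mono: "zero_clique m v n \<Longrightarrow> n' \<le> n \<Longrightarrow> zero_clique m v n'"
  by (auto simp: zero_clique_def)

lemma zero_clique_sigma_polar: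
  "zero_clique m v n \<Longrightarrow> i < n \<Longrightarrow> j < n \<Longrightarrow> sigma_polar m (v i) (v j) \<longleftrightarrow> i \<noteq> j"
  by (auto simp: zero_clique_def sigma_polar_def)

primrec xor_sum :: "(nat \<Rightarrow> nat) \<Rightarrow> nat set \<Rightarrow> nat \<Rightarrow> nat" where
  "xor_sum v T 0 = 0"
| "xor_sum v T (Suc k) = (if k \<in> T then xor (v k) (xor_sum v T k) else xor_sum v T k)"

lemma xor_sum_less: "zero_clique m v n \<Longrightarrow> k \<le> n \<Longrightarrow> xor_sum v T k < 4 ^ m"
  by (induction k) (auto simp: zero_clique_def xor_less_power_four)

lemma xor_xor_sum:
  "xor (xor_sum v T k) (xor_sum v U k) = xor_sum v (T - U \<union> (U - T)) k"
  by (induction k) (auto simp: ac_simps simp flip: xor.assoc)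

lemma Int_lessThan_Suc:
  "T \<inter> {..<Suc k} = (if k \<in> T then insert k (T \<inter> {..<k}) else T \<inter> {..<k})"
  by (auto simp: less_Suc_eq)

lemma sigma_polar_xor_sum:
  assumes clique: "zero_clique m v n" and "j < n" and "k \<le> n"
  shows "sigma_polar m (xor_sum v T k) (v j) \<longleftrightarrow> odd (card (T \<inter> {..<k} - {j}))"
  using assms(3)
proof (induction k)
  case (Suc k)
  then have IH: "sigma_polar m (xor_sum v T k) (v j) \<longleftrightarrow> odd (card (T \<inter> {..<k} - {j}))"
    by simp
  show ?case
  proof (cases "k \<in> T")
    case True
    have polar: "sigma_polar m (v k) (v j) \<longleftrightarrow> k \<noteq> j"
      using zero_clique_sigma_polar[OF clique] \<open>j < n\<close> Suc.prems by simp
    have "T \<inter> {..<Suc k} - {j}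
        = (if k = j then T \<inter> {..<k} - {j} else insert k (T \<inter> {..<k} - {j}))"
      using True by (auto simp: less_Suc_eq)
    moreover have "card (insert k (T \<inter> {..<k} - {j})) = Suc (card (T \<inter> {..<k} - {j}))"
      by (rule card_insert_disjoint) auto
    ultimately show ?thesis
      using True IH polar by (simp add: sigma_polar_xor_left)
  next
    case False
    then show ?thesis
      using IH by (simp add: Int_lessThan_Suc)
  qed
qed simp

lemma Suc_choose_two: "Suc n choose 2 = (n choose 2) + n"
  by (simp add: numeral_2_eq_2)

lemma sigma_xor_sum:
  assumes "zero_clique m v n" and "k \<le> n"
  shows "sigma m (xor_sum v T k) \<longleftrightarrow> odd (Suc (card (T \<inter> {..<k})) choose 2)"
  using assms(2)
proof (induction k)
  case (Suc k)
  have "sigma_polar m (v k) (xor_sum v T k) \<longleftrightarrow> odd (card (T \<inter> {..<k}))"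
    using sigma_polar_xor_sum[OF assms(1), of k k T] Suc.prems
    by (simp add: sigma_polar_commute Diff_triv)
  moreover have "sigma m (v k)"
    using assms(1) Suc.prems by (simp add: zero_clique_def)
  moreover have "card (insert k (T \<inter> {..<k})) = Suc (card (T \<inter> {..<k}))"
    by (rule card_insert_disjoint) auto
  ultimately show ?case
    using Suc by (auto simp: Int_lessThan_Suc sigma_xor Suc_choose_two[of "Suc _"])
qed (simp add: numeral_2_eq_2)

lemma empty_or_eq_if_parity_card_Diff_singleton_const:
  assumes "finite A" and "D \<subseteq> A" and "\<And>j. j \<in> A \<Longrightarrow> odd (card (D - {j})) \<longleftrightarrow> P"
  shows "D = {} \<or> D = A"
proof (rule ccontr)
  assume "\<not> (D = {} \<or> D = A)"
  then obtain i j where "i \<in> D" and "j \<in> A" and "j \<notin> D" using assms(2) by blast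
  moreover have "finite D" using assms(1,2) finite_subset by blast
  ultimately have "Suc (card (D - {i})) = card (D - {j})"
    by (metis Diff_insert0 Diff_empty card_Suc_Diff1)
  moreover have "odd (card (D - {i})) \<longleftrightarrow> odd (card (D - {j}))"
    using assms(2,3) \<open>i \<in> D\<close> \<open>j \<in> A\<close> by blast
  ultimately show False by (metis even_Suc)
qed

lemma inj_on_xor_sum:
  assumes clique: "zero_clique m v n" and "even n"
  shows "inj_on (\<lambda>T. xor_sum v T n) (Pow {..<n})"
proof (rule inj_onI)
  fix T U assume "T \<in> Pow {..<n}" "U \<in> Pow {..<n}" "xor_sum v T n = xor_sum v U n"
  moreover define D where "D = T - U \<union> (U - T)"
  ultimately have "xor_sum v D n = 0" and D: "D \<subseteq> {..<n}"
    using xor_xor_sum[of v T n U] by auto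
  then have even: "even (card (D - {j}))" if "j < n" for j
    using sigma_polar_xor_sum[OF clique that order.refl, of D] Int_absorb2[OF D] by simp
  then have "D = {} \<or> D = {..<n}"
    using empty_or_eq_if_parity_card_Diff_singleton_const[OF _ D, of False] by auto
  then have "D = {}"
    using even[of 0] \<open>even n\<close> by (cases "n = 0") auto
  then show "T = U" by (auto simp: D_def)
qed

lemma zero_clique_length_le:
  assumes "zero_clique m v n"
  shows "n \<le> 2 * m + 1"
proof (rule ccontr)
  assume "\<not> n \<le> 2 * m + 1"
  then have clique: "zero_clique m v (2 * m + 2)"
    using zero_clique_mono[OF assms] by simp
  have "(\<lambda>T. xor_sum v T (2 * m + 2)) ` Pow {..<2 * m + 2} \<subseteq> {..<4 ^ m}"
    using xor_sum_less[OF clique order.refl] by blast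
  then have "card (Pow {..<2 * m + 2}) \<le> card {..<(4::nat) ^ m}"
    by (intro card_inj_on_le[OF inj_on_xor_sum[OF clique]]) auto
  then show False by (simp add: card_Pow power_mult)
qed

lemma bij_betw_xor_sum:
  assumes clique: "zero_clique m v (2 * m)"
  shows "bij_betw (\<lambda>T. xor_sum v T (2 * m)) (Pow {..<2 * m}) {..<4 ^ m}"
proof (rule bij_betw_imageI)
  show inj: "inj_on (\<lambda>T. xor_sum v T (2 * m)) (Pow {..<2 * m})"
    using inj_on_xor_sum[OF clique] by simp
  have "(\<lambda>T. xor_sum v T (2 * m)) ` Pow {..<2 * m} \<subseteq> {..<4 ^ m}"
    using xor_sum_less[OF clique] by auto
  moreover have "card ((\<lambda>T. xor_sum v T (2 * m)) ` Pow {..<2 * m}) = card {..<(4::nat) ^ m}"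
    using card_image[OF inj] by (simp add: card_Pow power_mult)
  ultimately show "(\<lambda>T. xor_sum v T (2 * m)) ` Pow {..<2 * m} = {..<4 ^ m}"
    by (intro card_subset_eq) auto
qed

lemma sum_mod_div_mult:
  fixes f h :: "nat \<Rightarrow> 'a::comm_semiring_1"
  shows "(\<Sum>i<N * k. f (i mod k) * h (i div k)) = (\<Sum>d<k. f d) * (\<Sum>j<N. h j)"
proof -
  have "(\<Sum>i<N * k. f (i mod k) * h (i div k))
      = (\<Sum>j<N. \<Sum>i\<in>{j * k..<j * k + k}. f (i mod k) * h (i div k))"
    by (rule sum.nat_group[symmetric])
  also have "\<dots> = (\<Sum>j<N. \<Sum>d<k. f d * h j)"
  proof (rule sum.cong[OF refl])
    fix j
    have "(\<Sum>i\<in>{j * k..<j * k + k}. f (i mod k) * h (i div k))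
        = (\<Sum>d<k. f ((j * k + d) mod k) * h ((j * k + d) div k))"
      by (simp add: sum.atLeastLessThan_shift_0[of _ "j * k"] atLeast0LessThan)
    also have "\<dots> = (\<Sum>d<k. f d * h j)"
      by (rule sum.cong) auto
    finally show "(\<Sum>i\<in>{j * k..<j * k + k}. f (i mod k) * h (i div k)) = (\<Sum>d<k. f d * h j)" .
  qed
  also have "\<dots> = (\<Sum>d<k. f d) * (\<Sum>j<N. h j)"
    by (simp add: sum_product sum.swap[of _ "{..<N}"])
  finally show ?thesis .
qed

lemma sum_neg_one_power_digit_one_count: "(\<Sum>i<4 ^ m. (-1::int) ^ digit_one_count m i) = 2 ^ m"
proof (induction m)
  case (Suc m)
  have "(\<Sum>i<4 ^ Suc m. (-1::int) ^ digit_one_count (Suc m) i)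
      = (\<Sum>i<4 ^ m * 4. (-1) ^ of_bool (i mod 4 = 1) * (-1) ^ digit_one_count m (i div 4))"
    by (simp add: digit_one_count_Suc power_add mult.commute)
  also have "\<dots> = (\<Sum>d<4. (-1::int) ^ of_bool (d = (1::nat))) * (\<Sum>j<4 ^ m. (-1) ^ digit_one_count m j)"
    by (rule sum_mod_div_mult)
  also have "(\<Sum>d<4. (-1::int) ^ of_bool (d = (1::nat))) = 2"
    by (simp add: eval_nat_numeral)
  finally show ?case using Suc by simp
qed (simp add: digit_one_count_def)

definition triangular_sign :: "nat \<Rightarrow> int" where
  "triangular_sign t = (-1) ^ (Suc t choose 2)"

lemma triangular_sign_add_two: "triangular_sign (t + 2) = - triangular_sign t"
  by (simp add: triangular_sign_def Suc_choose_two numeral_2_eq_2 power_add)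

lemma triangular_sign_eq_one_iff: "triangular_sign m = 1 \<longleftrightarrow> m mod 4 = 0 \<or> m mod 4 = 3"
proof -
  have periodic: "triangular_sign (r + 4 * q) = triangular_sign r" for r q
  proof (induction q)
    case (Suc q)
    have "r + 4 * Suc q = r + 4 * q + 2 + 2" by simp
    then show ?case using Suc by (simp only: triangular_sign_add_two minus_minus)
  qed simp
  have "triangular_sign m = triangular_sign (m mod 4)"
    using periodic[of "m mod 4" "m div 4"] by simp
  moreover have "m mod 4 \<in> {0, 1, 2, 3}" by auto
  ultimately show ?thesis
    by (auto simp: triangular_sign_def choose_two)
qed

definition subset_sign_sum :: "nat \<Rightarrow> nat \<Rightarrow> int" where
  "subset_sign_sum r n = (\<Sum>T\<in>Pow {..<n}. triangular_sign (card T + r))"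

lemma subset_sign_sum_Suc:
  "subset_sign_sum r (Suc n) = subset_sign_sum r n + subset_sign_sum (Suc r) n"
proof -
  have inj: "inj_on (insert n) (Pow {..<n})"
    by (rule inj_onI) (metis PowD Diff_insert_absorb lessThan_iff order_less_irrefl subset_iff)
  have card_insert: "card (insert n T) = Suc (card T)" if "T \<in> Pow {..<n}" for T
    using that finite_subset by (auto intro!: card_insert_disjoint)
  have "subset_sign_sum r (Suc n)
      = subset_sign_sum r n + (\<Sum>T\<in>insert n ` Pow {..<n}. triangular_sign (card T + r))"
    unfolding subset_sign_sum_def lessThan_Suc Pow_insert
    by (rule sum.union_disjoint) auto
  also have "(\<Sum>T\<in>insert n ` Pow {..<n}. triangular_sign (card T + r)) = subset_sign_sum (Suc r) n"
    by (simp add: sum.reindex[OF inj] subset_sign_sum_def card_insert)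
  finally show ?thesis .
qed

lemma subset_sign_sum_add_two: "subset_sign_sum r (n + 2) = 2 * subset_sign_sum (Suc r) n"
proof -
  have "subset_sign_sum (r + 2) n = - subset_sign_sum r n"
    unfolding subset_sign_sum_def sum_negf[symmetric]
    by (simp only: add.assoc[symmetric] triangular_sign_add_two)
  then show ?thesis
    by (simp add: numeral_2_eq_2 subset_sign_sum_Suc)
qed

lemma subset_sign_sum_even: "subset_sign_sum r (2 * m) = 2 ^ m * triangular_sign (m + r)"
proof (induction m arbitrary: r)
  case (Suc m)
  then show ?case
    using subset_sign_sum_add_two[of r "2 * m"] by simp
qed (simp add: subset_sign_sum_def)

lemma zero_clique_even_length:
  assumes clique: "zero_clique m v (2 * m)"
  shows "m mod 4 = 0 \<or> m mod 4 = 3"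
proof -
  have "(2::int) ^ m = (\<Sum>i<4 ^ m. (-1) ^ digit_one_count m i)"
    by (simp add: sum_neg_one_power_digit_one_count)
  also have "\<dots> = (\<Sum>T\<in>Pow {..<2 * m}. (-1) ^ digit_one_count m (xor_sum v T (2 * m)))"
    by (rule sum.reindex_bij_betw[OF bij_betw_xor_sum[OF clique], symmetric])
  also have "\<dots> = subset_sign_sum 0 (2 * m)"
    unfolding subset_sign_sum_def
  proof (rule sum.cong[OF refl])
    fix T assume "T \<in> Pow {..<2 * m}"
    then have "sigma m (xor_sum v T (2 * m)) \<longleftrightarrow> odd (Suc (card T) choose 2)"
      using sigma_xor_sum[OF clique order.refl, of T] by (simp add: Int_absorb2)
    then show "(-1) ^ digit_one_count m (xor_sum v T (2 * m)) = triangular_sign (card T + 0)"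
      by (simp add: triangular_sign_def minus_one_power_iff sigma_iff_odd_digit_one_count)
  qed
  finally have "triangular_sign m = 1"
    by (simp add: subset_sign_sum_even)
  then show ?thesis
    by (simp add: triangular_sign_eq_one_iff)
qed

lemma zero_clique_odd_length:
  assumes clique: "zero_clique m v (2 * m + 1)"
  shows "odd m"
proof -
  have clique': "zero_clique m v (2 * m)"
    using zero_clique_mono[OF clique] by simp
  have "v (2 * m) \<in> {..<4 ^ m}"
    using clique by (simp add: zero_clique_def)
  then obtain T where v: "v (2 * m) = xor_sum v T (2 * m)" and "T \<in> Pow {..<2 * m}"
    unfolding bij_betw_imp_surj_on[OF bij_betw_xor_sum[OF clique'], symmetric] by (rule imageE)
  then have T: "T \<subseteq> {..<2 * m}" by simp
  have "sigma_polar m (v (2 * m)) (v j)" if "j < 2 * m" for j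
    using zero_clique_sigma_polar[OF clique, of "2 * m" j] that by simp
  then have "odd (card (T - {j}))" if "j < 2 * m" for j
    using sigma_polar_xor_sum[OF clique, of j "2 * m" T] that v Int_absorb2[OF T] by simp
  then have "T = {} \<or> T = {..<2 * m}"
    by (intro empty_or_eq_if_parity_card_Diff_singleton_const[OF finite_lessThan T, where P = True]) simp
  moreover have "sigma m (xor_sum v T (2 * m))"
    using clique by (simp add: zero_clique_def flip: v)
  then have "odd (Suc (card T) choose 2)"
    using sigma_xor_sum[OF clique, of "2 * m" T] Int_absorb2[OF T] by simp
  ultimately have "odd (Suc (2 * m) choose 2)"
    by (auto simp: numeral_2_eq_2)
  moreover have "Suc (2 * m) choose 2 = m * (2 * m + 1)"
    by (simp add: choose_two)
  ultimately show ?thesis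
    by simp
qed

lemma zero_clique_length_bound:
  assumes clique: "zero_clique m v n"
  shows "n + 1 \<le> 2 ^ (m mod 4) + 8 * (m div 4)"
proof -
  define c d where "c = m mod 4" and "d = m div 4"
  have m: "m = 4 * d + c" and "c < 4"
    by (simp_all add: c_def d_def)
  have le: "n \<le> 2 * m + 1"
    by (rule zero_clique_length_le[OF clique])
  have even: "c = 0 \<or> c = 3" if "2 * m \<le> n"
    using zero_clique_even_length[OF zero_clique_mono[OF clique that]] by (simp add: c_def)
  have odd: "odd c" if "n = 2 * m + 1"
  proof -
    have "odd m" using zero_clique_odd_length[of m v] clique that by simp
    then show ?thesis unfolding c_def by presburger
  qed
  have "c = 0 \<or> c = 1 \<or> c = 2 \<or> c = 3"
    using \<open>c < 4\<close> by linarith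
  then have "n + 1 \<le> 2 ^ c + 8 * d"
  proof (elim disjE)
    assume 1: "c = 0"
    then have "n \<noteq> 2 * m + 1" using odd by auto
    with 1 le m show ?thesis by simp
  next
    assume 2: "c = 1"
    then have "\<not> 2 * m \<le> n" using even by auto
    with 2 m show ?thesis by simp
  next
    assume 3: "c = 2"
    then have "\<not> 2 * m \<le> n" using even by auto
    with 3 m show ?thesis by simp
  next
    assume "c = 3"
    with le m show ?thesis by simp
  qed
  then show ?thesis by (simp add: c_def d_def)
qed

lemma xor_cancel_left [simp]: "xor a (xor a x) = (x::nat)"
  by (simp flip: xor.assoc)

lemma xor_cancel_right [simp]: "xor (xor x a) a = (x::nat)"
  by (simp add: xor.assoc)

lemma is_clique_xor_translate:
  assumes "is_clique m S" and "a < 4 ^ m"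
  shows "is_clique m ((\<lambda>x. xor x a) ` S)"
proof -
  have "xor (xor x a) (xor y a) = xor x y" for x y :: nat
    by (simp add: ac_simps)
  then show ?thesis
    using assms by (fastforce simp: is_clique_def cay_adj_def intro: xor_less_power_four)
qed

lemma ex_zero_clique_if_is_clique:
  assumes clique: "is_clique m S" and "0 \<in> S"
  shows "\<exists>v. zero_clique m v (card S - 1)"
proof -
  have "finite (S - {0})"
    using clique finite_subset by (auto simp: is_clique_def)
  then obtain v where v: "bij_betw v {0..<card (S - {0})} (S - {0})"
    using ex_bij_betw_nat_finite by blast
  have "zero_clique m v (card (S - {0}))"
    unfolding zero_clique_def
  proof (intro conjI allI impI)
    fix i assume "i < card (S - {0})"
    then have "v i \<in> S" "v i \<noteq> 0"
      using bij_betwE[OF v] by auto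
    then show "v i < 4 ^ m" and "sigma m (v i)"
      using clique \<open>0 \<in> S\<close> unfolding is_clique_def cay_adj_def
      by (metis lessThan_iff subsetD, metis xor.right_neutral)
  next
    fix i j assume "i < card (S - {0})" "j < card (S - {0})" "i \<noteq> j"
    then have "v i \<in> S" "v j \<in> S" "v i \<noteq> v j"
      using bij_betwE[OF v] inj_on_eq_iff[OF bij_betw_imp_inj_on[OF v]] by auto
    then show "sigma m (xor (v i) (v j))"
      using clique by (simp add: is_clique_def cay_adj_def)
  qed
  with \<open>0 \<in> S\<close> show ?thesis by auto
qed

lemma card_clique_le:
  assumes clique: "is_clique m S"
  shows "card S \<le> 2 ^ (m mod 4) + 8 * (m div 4)"
proof (cases "S = {}")
  case False
  then obtain a where "a \<in> S" by blast
  have "a < 4 ^ m"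
    using clique \<open>a \<in> S\<close> by (auto simp: is_clique_def)
  have "inj_on (\<lambda>x. xor x a) S"
    by (rule inj_onI) (metis xor_cancel_right)
  then have card: "card ((\<lambda>x. xor x a) ` S) = card S"
    by (rule card_image)
  have "0 \<in> (\<lambda>x. xor x a) ` S"
    using \<open>a \<in> S\<close> by (auto intro: image_eqI[of 0 _ a])
  then obtain v where "zero_clique m v (card ((\<lambda>x. xor x a) ` S) - 1)"
    using ex_zero_clique_if_is_clique[OF is_clique_xor_translate[OF clique \<open>a < 4 ^ m\<close>]] by blast
  then have "card S - 1 + 1 \<le> 2 ^ (m mod 4) + 8 * (m div 4)"
    unfolding card by (rule zero_clique_length_bound)
  moreover have "finite S"
    using clique finite_subset by (auto simp: is_clique_def)
  ultimately show ?thesis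
    using False by (simp add: card_gt_0_iff)
qed simp

lemma clique_number_le:
  assumes "\<And>S. is_clique m S \<Longrightarrow> card S \<le> b"
  shows "clique_number m \<le> b"
  unfolding clique_number_def
proof (rule Max.boundedI)
  have "card S \<le> 4 ^ m" if "is_clique m S" for S
    using card_mono[OF finite_lessThan, of S "4 ^ m"] that by (simp add: is_clique_def)
  then have "{card S |S. is_clique m S} \<subseteq> {..4 ^ m}"
    by auto
  then show "finite {card S |S. is_clique m S}"
    by (rule finite_subset) simp
  have "is_clique m {}"
    by (simp add: is_clique_def)
  then show "{card S |S. is_clique m S} \<noteq> {}"
    by blast
  show "n \<le> b" if "n \<in> {card S |S. is_clique m S}" for n
    using that assms by auto
qed

lemma hurwitz_radon_power_two: "hurwitz_radon (2 ^ k) = 2 ^ (k mod 4) + 8 * (k div 4)"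
proof -
  have "(THE j. (2::nat) ^ k = 2 ^ j) = k"
    by (rule the_equality) simp_all
  then show ?thesis
    by (simp add: hurwitz_radon_def)
qed

lemma Suc_mult_eight_less_power_sixteen: "1 \<le> d \<Longrightarrow> 8 * d + 1 < (16::nat) ^ d"
proof (induction d)
  case (Suc d)
  then show ?case by (cases "d = 0") auto
qed simp

lemma hurwitz_radon_power_two_less:
  assumes "4 \<le> k"
  shows "hurwitz_radon (2 ^ k) < 2 ^ k"
proof -
  define c d where "c = k mod 4" and "d = k div 4"
  have "1 \<le> d" using assms by (simp add: d_def)
  have "hurwitz_radon (2 ^ k) = 2 ^ c + 8 * d"
    by (simp add: hurwitz_radon_power_two c_def d_def)
  also have "\<dots> \<le> 2 ^ c * (8 * d + 1)"
    by (simp add: algebra_simps)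
  also have "\<dots> < 2 ^ c * 16 ^ d"
    using Suc_mult_eight_less_power_sixteen[OF \<open>1 \<le> d\<close>] by (intro mult_strict_left_mono) auto
  also have "\<dots> = 2 ^ (c + 4 * d)"
    by (simp add: power_add power_mult)
  also have "c + 4 * d = k"
    by (simp add: c_def d_def)
  finally show ?thesis .
qed

theorem lemma3:
  fixes m :: nat
  assumes "m \<ge> 1"
  shows "clique_number m \<le> hurwitz_radon (2 ^ m) \<and> (m \<ge> 4 \<longrightarrow> hurwitz_radon (2 ^ m) < 2 ^ m)"
proof
  show "clique_number m \<le> hurwitz_radon (2 ^ m)"
    unfolding hurwitz_radon_power_two by (rule clique_number_le[OF card_clique_le])
  show "m \<ge> 4 \<longrightarrow> hurwitz_radon (2 ^ m) < 2 ^ m"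
    using hurwitz_radon_power_two_less by blast
qed

end
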